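(* Let $\{f(\mathbf z;\boldsymbol\theta):\boldsymbol\theta\in\Theta\}$, $\Theta\subset\mathbb{R}^p$, be a family of probability mass or density functions on $\mathcal Z\subset\mathbb{R}^q$ of the form $f(\mathbf z;\boldsymbol\theta)=\int_\Omega\varphi(\mathbf v,\mathbf z,\boldsymbol\theta)\,\omega(\mathbf v)\,d\mathbf v$ with $\Omega\subset\mathbb{R}^d$, $\varphi:\Omega\times\mathcal Z\times\Theta\to\mathbb{R}$ and weight function $\omega:\Omega\to\mathbb{R}_+$, and let $\mathbf z_1,\dots,\mathbf z_n$ be i.i.d. from $f(\cdot;\boldsymbol\theta_0)$. For $r\in\mathbb N$ let $\tilde f_r(\mathbf z;\boldsymbol\theta)=\sum_{j=1}^r w_{j,r}\varphi(\mathbf v_{j,r},\mathbf z,\boldsymbol\theta)$ with (possibly random) nodes $\mathbf v_{j,r}\in\Omega$ and weights $w_{j,r}$ not depending on $\mathbf z$. Let $R:\mathbb N\to\mathbb N$, $\tilde L_n(\boldsymbol\theta)=\frac1n\sum_{i=1}^n\log\tilde f_{R(n)}(\mathbf z_i;\boldsymbol\theta)$ and $\hat{\boldsymbol\theta}_{MAL}=\arg\max_{\boldsymbol\theta\in\Theta}\tilde L_n(\boldsymbol\theta)$. Let $\bar{\mathcal E}_0(r)=\sup_{\mathbf z\in\mathcal Z,\boldsymbol\theta\in\Theta}|f(\mathbf z;\boldsymbol\theta)-\tilde f_r(\mathbf z;\boldsymbol\theta)|$. Assume: there is a continuous function $Q_0:\Theta\to\mathbb{R}$ uniquely maximized at $\boldsymbol\theta_0\in\Theta$,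 $\Theta$ is compact, and $L_n(\boldsymbol\theta)=\frac1n\sum_{i=1}^n\log f(\mathbf z_i;\boldsymbol\theta)$ converges uniformly in probability to $Q_0$ on $\Theta$; and (i) there is $\bar\delta>0$ with $f(\mathbf z;\boldsymbol\theta)>\bar\delta$ for all $\mathbf z\in\mathcal Z,\boldsymbol\theta\in\Theta$; (ii) $\varphi(\mathbf v,\mathbf z,\boldsymbol\theta)$ is continuous in $\boldsymbol\theta\in\Theta$; (iii) $\operatorname{plim}_{r\to\infty}\bar{\mathcal E}_0(r)=0$; (iv) $R(n)$ is monotonically increasing in $n$ and $\lim_{n\to\infty}R(n)=\infty$. Then $\hat{\boldsymbol\theta}_{MAL}\to\boldsymbol\theta_0$ in probability. *)

theory Defs
  imports "HOL-Probability.Probability"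
begin

text \<open>Outer probability (handles possibly non-measurable events such as those
involving an argmax or a supremum over the parameter set).\<close>
definition outer_prob :: "'a measure \<Rightarrow> 'a set \<Rightarrow> real" where
  "outer_prob M A = Inf {measure M B | B. B \<in> sets M \<and> A \<inter> space M \<subseteq> B}"

definition conv_in_prob :: "'a measure \<Rightarrow> (nat \<Rightarrow> 'a \<Rightarrow> 'b::metric_space) \<Rightarrow> 'b \<Rightarrow> bool" where
  "conv_in_prob M X c \<longleftrightarrow>
     (\<forall>e>0. ((\<lambda>n. outer_prob M {\<omega> \<in> space M. dist (X n \<omega>) c > e}) \<longlongrightarrow> 0) sequentially)"

definition fint :: "('d::euclidean_space) set \<Rightarrow> ('d \<Rightarrow> 'z \<Rightarrow> 't \<Rightarrow> real) \<Rightarrow> ('d \<Rightarrow> real)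
    \<Rightarrow> 'z \<Rightarrow> 't \<Rightarrow> real" where
  "fint \<Omega> \<phi> w z \<theta> = (LINT v : \<Omega> | lborel. \<phi> v z \<theta> * w v)"

definition ftilde :: "('d \<Rightarrow> 'z \<Rightarrow> 't \<Rightarrow> real) \<Rightarrow> (nat \<Rightarrow> nat \<Rightarrow> 'a \<Rightarrow> 'd)
    \<Rightarrow> (nat \<Rightarrow> nat \<Rightarrow> 'a \<Rightarrow> real) \<Rightarrow> nat \<Rightarrow> 'a \<Rightarrow> 'z \<Rightarrow> 't \<Rightarrow> real" where
  "ftilde \<phi> V W r \<omega> z \<theta> = (\<Sum>j = 1..r. W j r \<omega> * \<phi> (V j r \<omega>) z \<theta>)"

definition avg_loglik :: "('z \<Rightarrow> 't \<Rightarrow> real) \<Rightarrow> (nat \<Rightarrow> 'a \<Rightarrow> 'z) \<Rightarrow> nat \<Rightarrow> 'a \<Rightarrow> 't \<Rightarrow> real" where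
  "avg_loglik g z n \<omega> \<theta> = (1 / real n) * (\<Sum>i = 1..n. ln (g (z i \<omega>) \<theta>))"

definition E0bar :: "'z set \<Rightarrow> 't set \<Rightarrow> ('z \<Rightarrow> 't \<Rightarrow> real) \<Rightarrow> ('a \<Rightarrow> 'z \<Rightarrow> 't \<Rightarrow> real) \<Rightarrow> 'a \<Rightarrow> ereal" where
  "E0bar Z \<Theta> f g \<omega> = (SUP zt \<in> Z \<times> \<Theta>. ereal \<bar>f (fst zt) (snd zt) - g \<omega> (fst zt) (snd zt)\<bar>)"

end

theory Submission
  imports Defs
begin

text \<open>Fix \<open>\<epsilon> > 0\<close>. Since \<open>\<Theta>\<close> is compact and \<open>Q\<^sub>0\<close> is continuous with unique maximiser
  \<open>\<theta>\<^sub>0\<close>, there is a gap \<open>\<gamma> > 0\<close> with \<open>Q\<^sub>0 \<theta> \<le> Q\<^sub>0 \<theta>\<^sub>0 - \<gamma>\<close> whenever \<open>dist \<theta> \<theta>\<^sub>0 \<ge> \<epsilon>\<close>.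
  Because \<open>f > \<delta>\<close>, the logarithm is \<open>2/\<delta>\<close>-Lipschitz on the relevant range, so a quadrature
  error of at most \<open>\<eta>\<close> changes the average log-likelihood by at most \<open>2\<eta>/\<delta>\<close>, uniformly in
  \<open>\<theta>\<close>. Hence, on the event where \<open>L\<^sub>n\<close> is uniformly \<open>\<gamma>/4\<close>-close to \<open>Q\<^sub>0\<close> and the
  uniform quadrature error with \<open>R n\<close> nodes is at most \<open>\<eta> \<le> \<gamma>\<delta>/16\<close>, the approximate
  log-likelihood is uniformly within \<open>3\<gamma>/8\<close> of \<open>Q\<^sub>0\<close>, and any of its maximisers lies within \<open>\<epsilon>\<close> of \<open>\<theta>\<^sub>0\<close>. By uniform
  convergence, (iii) and \<open>R n \<rightarrow> \<infinity>\<close>, the complementary event has outer probability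
  tending to zero.\<close>

lemma outer_prob_set_nonempty: "{measure M B | B. B \<in> sets M \<and> A \<inter> space M \<subseteq> B} \<noteq> {}"
  by blast

lemma outer_prob_set_bdd_below: "bdd_below {measure M B | B. B \<in> sets M \<and> A \<inter> space M \<subseteq> B}"
  by (rule bdd_belowI[where m=0]) auto

lemma outer_prob_nonneg: "0 \<le> outer_prob M A"
  unfolding outer_prob_def by (rule cInf_greatest[OF outer_prob_set_nonempty]) auto

lemma outer_prob_le_measure:
  "B \<in> sets M \<Longrightarrow> A \<inter> space M \<subseteq> B \<Longrightarrow> outer_prob M A \<le> measure M B"
  unfolding outer_prob_def by (rule cInf_lower[OF _ outer_prob_set_bdd_below]) blast

lemma outer_prob_mono: "A \<subseteq> B \<Longrightarrow> outer_prob M A \<le> outer_prob M B"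
  unfolding outer_prob_def
  by (rule cInf_superset_mono[OF outer_prob_set_nonempty outer_prob_set_bdd_below]) blast

lemma outer_prob_approx:
  assumes "e > 0"
  obtains B where "B \<in> sets M" "A \<inter> space M \<subseteq> B" "measure M B < outer_prob M A + e"
proof -
  have "Inf {measure M B | B. B \<in> sets M \<and> A \<inter> space M \<subseteq> B} < outer_prob M A + e"
    using assms by (simp add: outer_prob_def)
  then show ?thesis
    using that by (auto simp: cInf_less_iff[OF outer_prob_set_nonempty outer_prob_set_bdd_below])
qed

lemma outer_prob_subadditive:
  assumes "finite_measure M"
  shows "outer_prob M (A \<union> B) \<le> outer_prob M A + outer_prob M B"
proof (rule field_le_epsilon)
  fix e :: real assume "e > 0"
  then obtain A' B' where
    A': "A' \<in> sets M" "A \<inter> space M \<subseteq> A'" "measure M A' < outer_prob M A + e / 2" and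
    B': "B' \<in> sets M" "B \<inter> space M \<subseteq> B'" "measure M B' < outer_prob M B + e / 2"
    by (metis half_gt_zero outer_prob_approx)
  have "outer_prob M (A \<union> B) \<le> measure M (A' \<union> B')"
    using A' B' by (intro outer_prob_le_measure) auto
  also have "\<dots> \<le> measure M A' + measure M B'"
    using A' B' assms by (intro measure_subadditive) (auto simp: finite_measure.emeasure_finite)
  finally show "outer_prob M (A \<union> B) \<le> outer_prob M A + outer_prob M B + e"
    using A' B' by linarith
qed

lemma outer_prob_tendsto_zero_if_subset_Un:
  assumes "finite_measure M" and "\<And>n. A n \<subseteq> B n \<union> C n"
    and "(\<lambda>n. outer_prob M (B n)) \<longlonglongrightarrow> 0" and "(\<lambda>n. outer_prob M (C n)) \<longlonglongrightarrow> 0"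
  shows "(\<lambda>n. outer_prob M (A n)) \<longlonglongrightarrow> 0"
proof (rule tendsto_sandwich[of "\<lambda>_. 0" _ _ "\<lambda>n. outer_prob M (B n) + outer_prob M (C n)"])
  show "\<forall>\<^sub>F n in sequentially. outer_prob M (A n) \<le> outer_prob M (B n) + outer_prob M (C n)"
    using order_trans[OF outer_prob_mono[OF assms(2)] outer_prob_subadditive[OF assms(1)]] by simp
  show "(\<lambda>n. outer_prob M (B n) + outer_prob M (C n)) \<longlonglongrightarrow> 0"
    using tendsto_add[OF assms(3,4)] by simp
qed (auto simp: outer_prob_nonneg)

lemma abs_ln_diff_le:
  fixes a b c :: real
  assumes "0 < c" "c \<le> a" "c \<le> b"
  shows "\<bar>ln a - ln b\<bar> \<le> \<bar>a - b\<bar> / c"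
proof -
  have one_side: "ln x - ln y \<le> \<bar>x - y\<bar> / c" if "c \<le> x" "c \<le> y" for x y :: real
  proof -
    have "ln x - ln y = ln (x / y)"
      using that assms by (simp add: ln_div)
    also have "\<dots> \<le> x / y - 1"
      using that assms by (intro ln_le_minus_one) simp
    also have "\<dots> = (x - y) / y"
      using that assms by (simp add: field_simps)
    also have "\<dots> \<le> \<bar>x - y\<bar> / y"
      using that assms by (intro divide_right_mono) auto
    also have "\<dots> \<le> \<bar>x - y\<bar> / c"
      using that assms by (intro divide_left_mono) auto
    finally show ?thesis .
  qed
  show ?thesis
    using one_side[of a b] one_side[of b a] assms by (simp add: abs_le_iff abs_minus_commute)
qed

lemma abs_avg_loglik_diff_le:
  assumes "\<And>i. i \<in> {1..n} \<Longrightarrow> \<bar>ln (g (z i \<omega>) \<theta>) - ln (h (z i \<omega>) \<theta>)\<bar> \<le> c" and "0 \<le> c"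
  shows "\<bar>avg_loglik g z n \<omega> \<theta> - avg_loglik h z n \<omega> \<theta>\<bar> \<le> c"
proof (cases "n = 0")
  case True
  then show ?thesis using assms by (simp add: avg_loglik_def)
next
  case False
  have "\<bar>avg_loglik g z n \<omega> \<theta> - avg_loglik h z n \<omega> \<theta>\<bar>
      = \<bar>\<Sum>i = 1..n. ln (g (z i \<omega>) \<theta>) - ln (h (z i \<omega>) \<theta>)\<bar> / real n"
    by (simp add: avg_loglik_def sum_subtractf abs_divide flip: diff_divide_distrib)
  also have "\<dots> \<le> (\<Sum>i = 1..n. c) / real n"
    using assms by (intro divide_right_mono order_trans[OF sum_abs sum_mono]) auto
  also have "\<dots> = c"
    using False by simp
  finally show ?thesis .
qed

lemma abs_avg_loglik_diff_le_uniform: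
  assumes f_lower: "\<forall>x\<in>Z. \<forall>\<theta>\<in>\<Theta>. f x \<theta> > \<delta>" and "\<delta> > 0"
    and approx: "\<forall>x\<in>Z. \<forall>\<theta>\<in>\<Theta>. \<bar>f x \<theta> - g x \<theta>\<bar> \<le> \<eta>" and "\<eta> \<le> \<delta> / 2"
    and z_in: "\<forall>i. z i \<omega> \<in> Z" and "\<theta> \<in> \<Theta>"
  shows "\<bar>avg_loglik g z n \<omega> \<theta> - avg_loglik f z n \<omega> \<theta>\<bar> \<le> 2 * \<eta> / \<delta>"
proof (rule abs_avg_loglik_diff_le)
  fix i
  have f_gt: "f (z i \<omega>) \<theta> > \<delta>" and fg_le: "\<bar>f (z i \<omega>) \<theta> - g (z i \<omega>) \<theta>\<bar> \<le> \<eta>"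
    using f_lower approx z_in \<open>\<theta> \<in> \<Theta>\<close> by auto
  then have "\<delta> / 2 \<le> g (z i \<omega>) \<theta>" "\<delta> / 2 \<le> f (z i \<omega>) \<theta>"
    using \<open>\<eta> \<le> \<delta> / 2\<close> by (auto simp: abs_le_iff)
  then have "\<bar>ln (g (z i \<omega>) \<theta>) - ln (f (z i \<omega>) \<theta>)\<bar> \<le> \<bar>g (z i \<omega>) \<theta> - f (z i \<omega>) \<theta>\<bar> / (\<delta> / 2)"
    using \<open>\<delta> > 0\<close> by (intro abs_ln_diff_le) auto
  also have "\<dots> \<le> \<eta> / (\<delta> / 2)"
    using fg_le \<open>\<delta> > 0\<close> by (intro divide_right_mono) (auto simp: abs_minus_commute)
  finally show "\<bar>ln (g (z i \<omega>) \<theta>) - ln (f (z i \<omega>) \<theta>)\<bar> \<le> 2 * \<eta> / \<delta>"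
    by (simp add: field_simps)
next
  have "0 \<le> \<eta>"
    using approx z_in \<open>\<theta> \<in> \<Theta>\<close> by (meson abs_ge_zero order_trans)
  then show "0 \<le> 2 * \<eta> / \<delta>"
    using \<open>\<delta> > 0\<close> by simp
qed

lemma E0bar_le_iff:
  "E0bar Z \<Theta> f g \<omega> \<le> ereal \<eta> \<longleftrightarrow> (\<forall>x\<in>Z. \<forall>\<theta>\<in>\<Theta>. \<bar>f x \<theta> - g \<omega> x \<theta>\<bar> \<le> \<eta>)"
  by (auto simp: E0bar_def SUP_le_iff)

lemma compact_unique_argmax_gap:
  fixes Q :: "'a::metric_space \<Rightarrow> real"
  assumes "compact \<Theta>" "continuous_on \<Theta> Q"
    and unique_max: "\<forall>\<theta>\<in>\<Theta>. \<theta> \<noteq> \<theta>0 \<longrightarrow> Q \<theta> < Q \<theta>0" and "\<epsilon> > 0"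
  obtains \<gamma> where "\<gamma> > 0" "\<forall>\<theta>\<in>\<Theta>. \<epsilon> \<le> dist \<theta> \<theta>0 \<longrightarrow> Q \<theta> \<le> Q \<theta>0 - \<gamma>"
proof (cases "\<Theta> \<inter> {\<theta>. \<epsilon> \<le> dist \<theta> \<theta>0} = {}")
  case True
  then show ?thesis using that[of 1] by auto
next
  case False
  let ?K = "\<Theta> \<inter> {\<theta>. \<epsilon> \<le> dist \<theta> \<theta>0}"
  have "compact ?K"
    using assms(1) by (intro compact_Int_closed closed_Collect_le continuous_intros)
  moreover have "continuous_on ?K Q"
    using assms(2) by (rule continuous_on_subset) auto
  ultimately obtain \<theta>1 where \<theta>1: "\<theta>1 \<in> ?K" "\<forall>\<theta>\<in>?K. Q \<theta> \<le> Q \<theta>1"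
    using continuous_attains_sup[OF _ False] by blast
  then have "Q \<theta>1 < Q \<theta>0"
    using unique_max \<open>\<epsilon> > 0\<close> by auto
  then show ?thesis
    using that[of "Q \<theta>0 - Q \<theta>1"] \<theta>1 by auto
qed

lemma dist_maximiser_lt_if_uniformly_close:
  fixes L Q :: "'a::metric_space \<Rightarrow> real"
  assumes gap: "\<forall>\<theta>\<in>\<Theta>. \<epsilon> \<le> dist \<theta> \<theta>0 \<longrightarrow> Q \<theta> \<le> Q \<theta>0 - \<gamma>"
    and close: "\<forall>\<theta>\<in>\<Theta>. \<bar>L \<theta> - Q \<theta>\<bar> \<le> c" and "2 * c < \<gamma>"
    and "\<theta>0 \<in> \<Theta>" "\<theta>' \<in> \<Theta>" "L \<theta>0 \<le> L \<theta>'"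
  shows "dist \<theta>' \<theta>0 < \<epsilon>"
proof (rule ccontr)
  assume "\<not> dist \<theta>' \<theta>0 < \<epsilon>"
  then have "Q \<theta>' \<le> Q \<theta>0 - \<gamma>"
    using gap \<open>\<theta>' \<in> \<Theta>\<close> by simp
  moreover have "\<bar>L \<theta>0 - Q \<theta>0\<bar> \<le> c" "\<bar>L \<theta>' - Q \<theta>'\<bar> \<le> c"
    using close \<open>\<theta>0 \<in> \<Theta>\<close> \<open>\<theta>' \<in> \<Theta>\<close> by auto
  ultimately show False
    using \<open>L \<theta>0 \<le> L \<theta>'\<close> \<open>2 * c < \<gamma>\<close> by (simp add: abs_le_iff)
qed

lemma dist_approx_loglik_maximiser_lt:
  fixes Q :: "'a::metric_space \<Rightarrow> real"
  assumes gap: "\<forall>\<theta>\<in>\<Theta>. \<epsilon> \<le> dist \<theta> \<theta>0 \<longrightarrow> Q \<theta> \<le> Q \<theta>0 - \<gamma>"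
    and close: "\<forall>\<theta>\<in>\<Theta>. \<bar>avg_loglik f z n \<omega> \<theta> - Q \<theta>\<bar> \<le> c"
    and f_lower: "\<forall>x\<in>Z. \<forall>\<theta>\<in>\<Theta>. f x \<theta> > \<delta>" and "\<delta> > 0"
    and approx: "\<forall>x\<in>Z. \<forall>\<theta>\<in>\<Theta>. \<bar>f x \<theta> - g x \<theta>\<bar> \<le> \<eta>" and "\<eta> \<le> \<delta> / 2"
    and "2 * (c + 2 * \<eta> / \<delta>) < \<gamma>" and z_in: "\<forall>i. z i \<omega> \<in> Z"
    and "\<theta>0 \<in> \<Theta>" "\<theta>' \<in> \<Theta>" "avg_loglik g z n \<omega> \<theta>0 \<le> avg_loglik g z n \<omega> \<theta>'"
  shows "dist \<theta>' \<theta>0 < \<epsilon>"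
proof (rule dist_maximiser_lt_if_uniformly_close[OF gap _ \<open>2 * (c + 2 * \<eta> / \<delta>) < \<gamma>\<close>])
  show "\<forall>\<theta>\<in>\<Theta>. \<bar>avg_loglik g z n \<omega> \<theta> - Q \<theta>\<bar> \<le> c + 2 * \<eta> / \<delta>"
  proof
    fix \<theta> assume "\<theta> \<in> \<Theta>"
    have "\<bar>avg_loglik g z n \<omega> \<theta> - avg_loglik f z n \<omega> \<theta>\<bar> \<le> 2 * \<eta> / \<delta>"
      using f_lower \<open>\<delta> > 0\<close> approx \<open>\<eta> \<le> \<delta> / 2\<close> z_in \<open>\<theta> \<in> \<Theta>\<close>
      by (rule abs_avg_loglik_diff_le_uniform)
    with close \<open>\<theta> \<in> \<Theta>\<close> show "\<bar>avg_loglik g z n \<omega> \<theta> - Q \<theta>\<bar> \<le> c + 2 * \<eta> / \<delta>"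
      by (force simp: abs_le_iff)
  qed
qed (use assms in auto)

theorem corollary10:
  fixes M :: "'a measure"
    and \<mu> :: "(real ^ 'q) measure"
    and Z :: "(real ^ 'q) set"
    and \<Theta> :: "(real ^ 'p) set"
    and \<Omega> :: "(real ^ 'd) set"
    and \<phi> :: "real ^ 'd \<Rightarrow> real ^ 'q \<Rightarrow> real ^ 'p \<Rightarrow> real"
    and w :: "real ^ 'd \<Rightarrow> real"
    and z :: "nat \<Rightarrow> 'a \<Rightarrow> real ^ 'q"
    and V :: "nat \<Rightarrow> nat \<Rightarrow> 'a \<Rightarrow> real ^ 'd"
    and W :: "nat \<Rightarrow> nat \<Rightarrow> 'a \<Rightarrow> real"
    and R :: "nat \<Rightarrow> nat"
    and Q0 :: "real ^ 'p \<Rightarrow> real"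
    and \<theta>0 :: "real ^ 'p"
    and \<theta>MAL :: "nat \<Rightarrow> 'a \<Rightarrow> real ^ 'p"
    and \<delta> :: real
  assumes M: "prob_space M"
    and Z_meas: "Z \<in> sets borel"
    and w_nonneg: "\<forall>v\<in>\<Omega>. w v \<ge> 0"
    \<comment> \<open>the family consists of probability mass/density functions w.r.t. base measure mu\<close>
    and f_nonneg: "\<forall>\<theta>\<in>\<Theta>. \<forall>x\<in>Z. fint \<Omega> \<phi> w x \<theta> \<ge> 0"
    and f_total: "\<forall>\<theta>\<in>\<Theta>. (\<integral>\<^sup>+ x. indicator Z x * ennreal (fint \<Omega> \<phi> w x \<theta>) \<partial>\<mu>) = 1"
    \<comment> \<open>z_1, z_2, ... i.i.d. with density f(.;theta0), values in Z\<close>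
    and z_meas: "\<forall>i. z i \<in> borel_measurable M"
    and z_in_Z: "\<forall>i. \<forall>\<omega>\<in>space M. z i \<omega> \<in> Z"
    and z_distr: "\<forall>i. distr M borel (z i) = density \<mu> (\<lambda>x. indicator Z x * ennreal (fint \<Omega> \<phi> w x \<theta>0))"
    and z_indep: "prob_space.indep_vars M (\<lambda>_. borel) z UNIV"
    \<comment> \<open>nodes in Omega\<close>
    and V_in: "\<forall>r j \<omega>. 1 \<le> j \<longrightarrow> j \<le> r \<longrightarrow> \<omega> \<in> space M \<longrightarrow> V j r \<omega> \<in> \<Omega>"
    \<comment> \<open>the MAL estimator is a maximiser of the approximate log-likelihood over Theta\<close>
    and MAL_in: "\<forall>n. \<forall>\<omega>\<in>space M. \<theta>MAL n \<omega> \<in> \<Theta>"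
    and MAL_max: "\<forall>n. \<forall>\<omega>\<in>space M. \<forall>\<theta>\<in>\<Theta>.
        avg_loglik (ftilde \<phi> V W (R n) \<omega>) z n \<omega> \<theta>
          \<le> avg_loglik (ftilde \<phi> V W (R n) \<omega>) z n \<omega> (\<theta>MAL n \<omega>)"
    \<comment> \<open>identification and uniform convergence\<close>
    and Theta_compact: "compact \<Theta>"
    and theta0_in: "\<theta>0 \<in> \<Theta>"
    and Q0_cont: "continuous_on \<Theta> Q0"
    and Q0_max: "\<forall>\<theta>\<in>\<Theta>. \<theta> \<noteq> \<theta>0 \<longrightarrow> Q0 \<theta> < Q0 \<theta>0"
    and unif_conv: "\<forall>e>0. ((\<lambda>n. outer_prob M {\<omega> \<in> space M.
        (SUP \<theta>\<in>\<Theta>. ereal \<bar>avg_loglik (fint \<Omega> \<phi> w) z n \<omega> \<theta> - Q0 \<theta>\<bar>) > ereal e}) \<longlongrightarrow> 0) sequentially"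
    \<comment> \<open>(i)\<close>
    and delta_pos: "\<delta> > 0"
    and f_lower: "\<forall>x\<in>Z. \<forall>\<theta>\<in>\<Theta>. fint \<Omega> \<phi> w x \<theta> > \<delta>"
    \<comment> \<open>(ii)\<close>
    and phi_cont: "\<forall>v\<in>\<Omega>. \<forall>x\<in>Z. continuous_on \<Theta> (\<phi> v x)"
    \<comment> \<open>(iii)\<close>
    and E0_plim: "\<forall>e>0. ((\<lambda>r. outer_prob M {\<omega> \<in> space M.
        E0bar Z \<Theta> (fint \<Omega> \<phi> w) (ftilde \<phi> V W r) \<omega> > ereal e}) \<longlongrightarrow> 0) sequentially"
    \<comment> \<open>(iv)\<close>
    and R_mono: "mono R"
    and R_lim: "filterlim R at_top sequentially"
  shows "conv_in_prob M \<theta>MAL \<theta>0"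
proof (unfold conv_in_prob_def, intro allI impI)
  fix \<epsilon> :: real assume "\<epsilon> > 0"
  interpret prob_space M by (rule M)
  obtain \<gamma> where "\<gamma> > 0" and gap: "\<forall>\<theta>\<in>\<Theta>. \<epsilon> \<le> dist \<theta> \<theta>0 \<longrightarrow> Q0 \<theta> \<le> Q0 \<theta>0 - \<gamma>"
    using compact_unique_argmax_gap[OF Theta_compact Q0_cont Q0_max \<open>\<epsilon> > 0\<close>] by blast
  define \<eta> where "\<eta> = min (\<delta> / 2) (\<gamma> * \<delta> / 16)"
  have \<eta>: "0 < \<eta>" "\<eta> \<le> \<delta> / 2" "2 * (\<gamma> / 4 + 2 * \<eta> / \<delta>) < \<gamma>"
    using delta_pos \<open>\<gamma> > 0\<close> by (auto simp: \<eta>_def min_def field_simps)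
  define B where "B n = {\<omega> \<in> space M.
    (SUP \<theta>\<in>\<Theta>. ereal \<bar>avg_loglik (fint \<Omega> \<phi> w) z n \<omega> \<theta> - Q0 \<theta>\<bar>) > ereal (\<gamma> / 4)}" for n
  define C where "C r = {\<omega> \<in> space M. E0bar Z \<Theta> (fint \<Omega> \<phi> w) (ftilde \<phi> V W r) \<omega> > ereal \<eta>}" for r
  have "{\<omega> \<in> space M. dist (\<theta>MAL n \<omega>) \<theta>0 > \<epsilon>} \<subseteq> B n \<union> C (R n)" for n
  proof (intro subsetI, rule ccontr)
    fix \<omega> assume \<omega>: "\<omega> \<in> {\<omega> \<in> space M. dist (\<theta>MAL n \<omega>) \<theta>0 > \<epsilon>}" "\<omega> \<notin> B n \<union> C (R n)"
    then have "\<forall>\<theta>\<in>\<Theta>. \<bar>avg_loglik (fint \<Omega> \<phi> w) z n \<omega> \<theta> - Q0 \<theta>\<bar> \<le> \<gamma> / 4"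
      and "\<forall>x\<in>Z. \<forall>\<theta>\<in>\<Theta>. \<bar>fint \<Omega> \<phi> w x \<theta> - ftilde \<phi> V W (R n) \<omega> x \<theta>\<bar> \<le> \<eta>"
      by (auto simp: B_def C_def not_less SUP_le_iff simp flip: E0bar_le_iff)
    then have "dist (\<theta>MAL n \<omega>) \<theta>0 < \<epsilon>"
      using \<omega>(1) z_in_Z MAL_in MAL_max theta0_in
      by (intro dist_approx_loglik_maximiser_lt[OF gap _ f_lower delta_pos _ \<eta>(2,3)]) auto
    with \<omega>(1) show False by simp
  qed
  moreover have "(\<lambda>n. outer_prob M (B n)) \<longlonglongrightarrow> 0"
    using unif_conv \<open>\<gamma> > 0\<close> by (simp add: B_def)
  moreover have "(\<lambda>n. outer_prob M (C (R n))) \<longlonglongrightarrow> 0"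
    using E0_plim \<eta>(1) R_lim by (auto simp: C_def intro: filterlim_compose)
  ultimately show "(\<lambda>n. outer_prob M {\<omega> \<in> space M. dist (\<theta>MAL n \<omega>) \<theta>0 > \<epsilon>}) \<longlonglongrightarrow> 0"
    by (rule outer_prob_tendsto_zero_if_subset_Un[OF finite_measure_axioms])
qed

end
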